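(* For every integer $n \ge 1$, $\Lambda_{n+1} \ge \Lambda_n$; that is, $\Lambda_n$ is nondecreasing in $n$.
   Context: All graphs are finite, simple and undirected (not necessarily connected). For a graph $G=(V,E)$ and a vertex $v\in V$, let $N_v$ be the set of neighbours of $v$. The local complementation (LC) of $G$ at $v$ is the graph $G^v$ obtained from $G$ by complementing the subgraph induced on $N_v$ (i.e., for each pair of distinct $a,b\in N_v$, the edge $ab$ is added if absent and removed if present; all other adjacencies are unchanged). The LC orbit $[G]$ of $G$ is the set of all graphs obtainable from $G$ by a finite sequence of local complementations (graphs are considered up to isomorphism). Let $\alpha(G)$ denote the independence number of $G$ (size of a maximum independent set), and define $\lambda(G)=\max_{H\in[G]}\alpha(H)$. Let $\Lambda_n$ be the minimum of $\lambda(G)$ over all graphs $G$ on $n$ vertices. *)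

theory Defs
  imports Main
begin

definition graph_on :: "nat \<Rightarrow> (nat \<Rightarrow> nat \<Rightarrow> bool) \<Rightarrow> bool" where
  "graph_on n E \<longleftrightarrow> (\<forall>u v. E u v \<longrightarrow> u < n \<and> v < n) \<and> (\<forall>u v. E u v = E v u) \<and> (\<forall>u. \<not> E u u)"

definition local_comp :: "(nat \<Rightarrow> nat \<Rightarrow> bool) \<Rightarrow> nat \<Rightarrow> (nat \<Rightarrow> nat \<Rightarrow> bool)" where
  "local_comp E v = (\<lambda>a b. if a \<noteq> b \<and> E v a \<and> E v b then \<not> E a b else E a b)"

inductive_set lc_orbit :: "(nat \<Rightarrow> nat \<Rightarrow> bool) \<Rightarrow> (nat \<Rightarrow> nat \<Rightarrow> bool) set"
  for E :: "nat \<Rightarrow> nat \<Rightarrow> bool" where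
  base: "E \<in> lc_orbit E"
| step: "H \<in> lc_orbit E \<Longrightarrow> local_comp H v \<in> lc_orbit E"

definition independent_set :: "nat \<Rightarrow> (nat \<Rightarrow> nat \<Rightarrow> bool) \<Rightarrow> nat set \<Rightarrow> bool" where
  "independent_set n E S \<longleftrightarrow> S \<subseteq> {..<n} \<and> (\<forall>a\<in>S. \<forall>b\<in>S. \<not> E a b)"

definition indep_number :: "nat \<Rightarrow> (nat \<Rightarrow> nat \<Rightarrow> bool) \<Rightarrow> nat" where
  "indep_number n E = Max (card ` {S. independent_set n E S})"

definition lc_lambda :: "nat \<Rightarrow> (nat \<Rightarrow> nat \<Rightarrow> bool) \<Rightarrow> nat" where
  "lc_lambda n E = Max (indep_number n ` lc_orbit E)"

definition Lambda :: "nat \<Rightarrow> nat" where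
  "Lambda n = Min (lc_lambda n ` {E. graph_on n E})"

end

theory Submission
  imports Defs
begin

text \<open>
  Deleting vertices cannot increase \<open>\<lambda>\<close>: local complementation at a kept vertex commutes
  with taking the induced subgraph, and local complementation at a deleted vertex does not
  change it. Hence every graph in the LC orbit of an induced subgraph of \<open>G\<close> is an induced
  subgraph of a graph in the orbit of \<open>G\<close>, and its independent sets remain independent there.
  Applying this to a graph on \<open>n + 1\<close> vertices attaining \<open>\<Lambda>\<^sub>n\<^sub>+\<^sub>1\<close> gives
  \<open>\<Lambda>\<^sub>n \<le> \<Lambda>\<^sub>n\<^sub>+\<^sub>1\<close>.
\<close>

definition induced_subgraph :: "nat \<Rightarrow> (nat \<Rightarrow> nat \<Rightarrow> bool) \<Rightarrow> (nat \<Rightarrow> nat \<Rightarrow> bool)" where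
  "induced_subgraph m E = (\<lambda>a b. a < m \<and> b < m \<and> E a b)"

lemma graph_on_induced_subgraph:
  "graph_on n E \<Longrightarrow> graph_on m (induced_subgraph m E)"
  by (auto simp: graph_on_def induced_subgraph_def)

lemma local_comp_induced_subgraph:
  "v < m \<Longrightarrow> induced_subgraph m (local_comp E v) = local_comp (induced_subgraph m E) v"
  by (auto simp: induced_subgraph_def local_comp_def fun_eq_iff)

lemma local_comp_induced_subgraph_outside:
  "m \<le> v \<Longrightarrow> local_comp (induced_subgraph m E) v = induced_subgraph m E"
  by (auto simp: induced_subgraph_def local_comp_def fun_eq_iff)

lemma lc_orbit_induced_subgraph:
  assumes "H \<in> lc_orbit (induced_subgraph m G)"
  shows "\<exists>K \<in> lc_orbit G. induced_subgraph m K = H"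
  using assms
proof (induction rule: lc_orbit.induct)
  case base
  then show ?case using lc_orbit.base by blast
next
  case (step H v)
  then obtain K where K: "K \<in> lc_orbit G" "induced_subgraph m K = H" by blast
  show ?case
  proof (cases "v < m")
    case True
    then have "induced_subgraph m (local_comp K v) = local_comp H v"
      using K(2) by (simp add: local_comp_induced_subgraph)
    then show ?thesis using K(1) lc_orbit.step by blast
  next
    case False
    then have "local_comp H v = H"
      using K(2) local_comp_induced_subgraph_outside by (metis not_less)
    then show ?thesis using K by auto
  qed
qed

lemma finite_card_independent_sets: "finite (card ` {S. independent_set n E S})"
proof -
  have "{S. independent_set n E S} \<subseteq> Pow {..<n}"
    by (auto simp: independent_set_def)
  then show ?thesis
    by (meson finite_Pow_iff finite_imageI finite_lessThan finite_subset)
qed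

lemma independent_set_empty: "independent_set n E {}"
  by (simp add: independent_set_def)

lemma indep_number_le: "indep_number n E \<le> n"
  unfolding indep_number_def
proof (subst Max_le_iff)
  show "finite (card ` {S. independent_set n E S})"
    by (rule finite_card_independent_sets)
  show "card ` {S. independent_set n E S} \<noteq> {}"
    using independent_set_empty by blast
  show "\<forall>a \<in> card ` {S. independent_set n E S}. a \<le> n"
    by (auto simp: independent_set_def dest: card_mono[OF finite_lessThan])
qed

lemma indep_number_induced_subgraph_le:
  assumes "m \<le> n"
  shows "indep_number m (induced_subgraph m E) \<le> indep_number n E"
  unfolding indep_number_def
proof (rule Max_mono)
  show "card ` {S. independent_set m (induced_subgraph m E) S}
      \<subseteq> card ` {S. independent_set n E S}"
    using assms by (intro image_mono) (auto simp: independent_set_def induced_subgraph_def)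
  show "card ` {S. independent_set m (induced_subgraph m E) S} \<noteq> {}"
    using independent_set_empty by blast
qed (rule finite_card_independent_sets)

lemma finite_indep_number_lc_orbit: "finite (indep_number n ` lc_orbit E)"
  using indep_number_le finite_subset[of _ "{..n}"] by blast

lemma lc_lambda_le: "lc_lambda n E \<le> n"
  unfolding lc_lambda_def
  using finite_indep_number_lc_orbit lc_orbit.base[of E] indep_number_le
  by (subst Max_le_iff) auto

lemma lc_lambda_induced_subgraph_le:
  assumes "m \<le> n"
  shows "lc_lambda m (induced_subgraph m G) \<le> lc_lambda n G"
  unfolding lc_lambda_def
proof (subst Max_le_iff)
  show "finite (indep_number m ` lc_orbit (induced_subgraph m G))"
    by (rule finite_indep_number_lc_orbit)
  show "indep_number m ` lc_orbit (induced_subgraph m G) \<noteq> {}"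
    using lc_orbit.base by blast
  show "\<forall>a \<in> indep_number m ` lc_orbit (induced_subgraph m G).
          a \<le> Max (indep_number n ` lc_orbit G)"
  proof
    fix a assume "a \<in> indep_number m ` lc_orbit (induced_subgraph m G)"
    then obtain H where H: "H \<in> lc_orbit (induced_subgraph m G)" "a = indep_number m H"
      by blast
    then obtain K where K: "K \<in> lc_orbit G" "induced_subgraph m K = H"
      using lc_orbit_induced_subgraph by blast
    have "a \<le> indep_number n K"
      using H(2) K(2) indep_number_induced_subgraph_le[OF assms] by blast
    also have "\<dots> \<le> Max (indep_number n ` lc_orbit G)"
      using finite_indep_number_lc_orbit K(1) by (simp add: Max_ge)
    finally show "a \<le> Max (indep_number n ` lc_orbit G)" .
  qed
qed

lemma finite_lc_lambda_graphs: "finite (lc_lambda n ` {E. graph_on n E})"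
  using lc_lambda_le finite_subset[of _ "{..n}"] by blast

lemma Lambda_le: "graph_on n E \<Longrightarrow> Lambda n \<le> lc_lambda n E"
  unfolding Lambda_def using finite_lc_lambda_graphs by (simp add: Min_le)

lemma Lambda_attained: "\<exists>G. graph_on n G \<and> Lambda n = lc_lambda n G"
proof -
  have "graph_on n (\<lambda>_ _. False)"
    by (simp add: graph_on_def)
  then have "lc_lambda n ` {E. graph_on n E} \<noteq> {}"
    by blast
  then have "Lambda n \<in> lc_lambda n ` {E. graph_on n E}"
    unfolding Lambda_def using Min_in finite_lc_lambda_graphs by blast
  then show ?thesis by blast
qed

lemma Lambda_mono:
  assumes "m \<le> n"
  shows "Lambda m \<le> Lambda n"
proof -
  obtain G where G: "graph_on n G" "Lambda n = lc_lambda n G"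
    using Lambda_attained by blast
  have "Lambda m \<le> lc_lambda m (induced_subgraph m G)"
    using G(1) by (intro Lambda_le graph_on_induced_subgraph)
  also have "\<dots> \<le> Lambda n"
    using G(2) lc_lambda_induced_subgraph_le[OF assms] by simp
  finally show ?thesis .
qed

theorem mainTheorem1:
  fixes n :: nat
  assumes "n \<ge> 1"
  shows "Lambda n \<le> Lambda (Suc n)"
  by (rule Lambda_mono) simp

end
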